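(* Let $D\ge 1$, $0<a<\tfrac12$, $N_0>0$, $P>0$, and $\sigma_{\mathrm{eff}}=\sqrt{N_0/P}$. For real $x$ let $x \bmod 1 \triangleq x-\lfloor x+\tfrac12\rfloor$, applied entrywise to vectors. For $t\in\mathbb{R}$ define the per-dimension distortion $$\delta(t)=\mathbb{E}_{n}\Big[\big([t+n]\bmod 1 - t\big)^2\Big],\qquad n\sim\mathcal{N}(0,\sigma_{\mathrm{eff}}^2),$$ and for $\mathbf{s}\in\mathbb{R}^D$ define $\delta(\mathbf{s})=\mathbb{E}_{\mathbf{n}}\big[\lVert[\mathbf{s}+\mathbf{n}]\bmod 1-\mathbf{s}\rVert^2\big]$ with $\mathbf{n}\sim\mathcal{N}(\mathbf{0},\sigma_{\mathrm{eff}}^2\mathbf{I}_D)$ (so $\delta(\mathbf{s})=\sum_{d=1}^D\delta(s_d)$). Then for every $\mathbf{s}=(s_1,\dots,s_D)\in[-a,a]^D$, $$D\,\delta(0)\le\delta(\mathbf{s})\le D\,\delta(a).$$ Moreover, for real numbers $s_d,s'_d\in[-a,a]$ with $|s'_d|<|s_d|$, one has $\delta(s'_d)<\delta(s_d)$.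
   Context: Interpretation: in the P$^2$-AirComp protocol, when the true sum equals $\mathbf{s}\in[-a,a]^D$, the server's estimate is $[\mathbf{s}+\mathbf{z}/\sqrt{P}]\bmod 1$ with channel noise $\mathbf{z}\sim\mathcal{N}(\mathbf{0},N_0\mathbf{I}_D)$, so $\delta(\mathbf{s})$ is its pointwise mean-square error; the bound holds for arbitrary distributions of the sum supported in $[-a,a]^D$. *)

theory Defs
  imports "HOL-Probability.Probability"
begin

definition mod1 :: "real \<Rightarrow> real" where
  "mod1 x = x - real_of_int \<lfloor>x + 1/2\<rfloor>"

definition gauss :: "real \<Rightarrow> real measure" where
  "gauss \<sigma> = density lborel (normal_density 0 \<sigma>)"

definition delta1 :: "real \<Rightarrow> real \<Rightarrow> real" where
  "delta1 \<sigma> t = (\<integral>n. (mod1 (t + n) - t)\<^sup>2 \<partial>gauss \<sigma>)"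

definition deltaD :: "real \<Rightarrow> nat \<Rightarrow> (nat \<Rightarrow> real) \<Rightarrow> real" where
  "deltaD \<sigma> D s = (\<integral>n. (\<Sum>d<D. (mod1 (s d + n d) - s d)\<^sup>2) \<partial>(PiM {..<D} (\<lambda>_. gauss \<sigma>)))"

end

theory Submission
  imports Defs
begin

(* Write mod1 (t + n) - t = n - k, where k is the integer nearest to n + t: the distortion
   delta(t) averages the squared distance from n to an integer that is optimal for n + t
   rather than for n. For 0 <= u < v < 1/2 the integer chosen for n + v is never closer to n
   than the one chosen for n + u, and strictly farther when n lies in (1/2 - v, 1/2 - u);
   since the Gaussian charges every interval, delta is strictly increasing on [0, 1/2).
   Rounding is odd off the countable set of half-integers and the Gaussian is symmetric,
   so delta is even. Each coordinate of the product Gaussian is a scalar Gaussian, hence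
   the D-dimensional distortion is the sum of the coordinate distortions. *)

lemma prob_space_gauss: "\<sigma> > 0 \<Longrightarrow> prob_space (gauss \<sigma>)"
  unfolding gauss_def by (rule prob_space_normal_density)

lemma sets_gauss [simp, measurable_cong]: "sets (gauss \<sigma>) = sets borel"
  unfolding gauss_def by simp

lemma AE_gauss_not_in_countable:
  assumes "countable A"
  shows "AE x in gauss \<sigma>. x \<notin> A"
proof -
  have "AE x in lborel. x \<notin> A"
    using assms by (intro AE_not_in countable_imp_null_set_lborel)
  then show ?thesis
    unfolding gauss_def by (subst AE_density) (auto elim: AE_mp)
qed

lemma emeasure_gauss_greaterThanLessThan_nonzero:
  assumes "\<sigma> > 0" and "\<alpha> < \<beta>"
  shows "emeasure (gauss \<sigma>) {\<alpha><..<\<beta>} \<noteq> 0"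
proof
  assume "emeasure (gauss \<sigma>) {\<alpha><..<\<beta>} = 0"
  then have "AE x in lborel. x \<in> {\<alpha><..<\<beta>} \<longrightarrow> normal_density 0 \<sigma> x = 0"
    using null_sets_density_iff[of "normal_density 0 \<sigma>" lborel "{\<alpha><..<\<beta>}"]
    unfolding gauss_def by (auto simp: null_sets_def)
  then have "AE x in lborel. x \<notin> {\<alpha><..<\<beta>}"
    using normal_density_pos[OF \<open>\<sigma> > 0\<close>, of 0] by (auto elim!: AE_mp intro!: AE_I2 simp: less_le)
  then have "emeasure lborel {\<alpha><..<\<beta>} = 0"
    by (subst (asm) AE_iff_measurable[of "{\<alpha><..<\<beta>}"]) auto
  then show False
    using \<open>\<alpha> < \<beta>\<close> by simp
qed

lemma integral_gauss_reflect:
  fixes f :: "real \<Rightarrow> real"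
  assumes [measurable]: "f \<in> borel_measurable borel"
  shows "(\<integral>x. f (- x) \<partial>gauss \<sigma>) = (\<integral>x. f x \<partial>gauss \<sigma>)"
proof -
  have "(\<integral>x. f x \<partial>gauss \<sigma>) = (\<integral>x. normal_density 0 \<sigma> x * f x \<partial>lborel)"
    unfolding gauss_def by (simp add: integral_density)
  also have "\<dots> = (\<integral>x. normal_density 0 \<sigma> (- x) * f (- x) \<partial>lborel)"
    by (subst lborel_integral_real_affine[where c = "-1" and t = 0]) auto
  also have "\<dots> = (\<integral>x. f (- x) \<partial>gauss \<sigma>)"
    unfolding gauss_def by (simp add: integral_density normal_density_def)
  finally show ?thesis ..
qed

lemma mod1_measurable [measurable]: "mod1 \<in> borel_measurable borel"
  unfolding mod1_def by measurable

lemma abs_mod1_le: "\<bar>mod1 x\<bar> \<le> 1/2"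
  unfolding mod1_def by linarith

lemma mod1_minus:
  assumes "x + 1/2 \<notin> \<int>"
  shows "mod1 (- x) = - mod1 x"
proof -
  have "x + 1/2 \<noteq> of_int \<lfloor>x + 1/2\<rfloor>"
    using assms by (metis Ints_of_int)
  then have "\<lceil>x + 1/2\<rceil> = \<lfloor>x + 1/2\<rfloor> + 1"
    by (simp add: ceiling_altdef)
  moreover have "\<lceil>x - 1/2\<rceil> = \<lceil>x + 1/2\<rceil> - 1"
    using ceiling_diff_one[of "x + 1/2"] by simp
  ultimately show ?thesis
    unfolding mod1_def using floor_minus[of "x - 1/2"] by simp
qed

lemma integrable_mod1_error:
  assumes "\<sigma> > 0"
  shows "integrable (gauss \<sigma>) (\<lambda>n. (mod1 (t + n) - t)\<^sup>2)"
proof -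
  interpret prob_space "gauss \<sigma>"
    using prob_space_gauss[OF assms] .
  have "\<bar>mod1 (t + n) - t\<bar> \<le> 1/2 + \<bar>t\<bar>" for n
    using abs_mod1_le[of "t + n"] by linarith
  then have "norm ((mod1 (t + n) - t)\<^sup>2) \<le> (1/2 + \<bar>t\<bar>)\<^sup>2" for n
    by (simp add: power2_le_iff_abs_le)
  then show ?thesis
    by (intro integrable_const_bound[where B = "(1/2 + \<bar>t\<bar>)\<^sup>2"]) auto
qed

lemma delta1_minus: "delta1 \<sigma> (- t) = delta1 \<sigma> t"
proof -
  have "delta1 \<sigma> (- t) = (\<integral>n. (mod1 (- (t + n)) + t)\<^sup>2 \<partial>gauss \<sigma>)"
    unfolding delta1_def
    by (subst integral_gauss_reflect[symmetric]) (simp_all add: algebra_simps)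
  also have "\<dots> = delta1 \<sigma> t"
    unfolding delta1_def
  proof (rule integral_cong_AE)
    have "countable ((\<lambda>z. z - t - 1/2) ` \<int>)"
      by (intro countable_image countable_int)
    moreover have "{n. t + n + 1/2 \<in> \<int>} = (\<lambda>z. z - t - 1/2) ` \<int>"
      by (auto simp: image_iff algebra_simps intro: bexI[where x = "t + _ + 1/2"])
    ultimately have "AE n in gauss \<sigma>. t + n + 1/2 \<notin> \<int>"
      using AE_gauss_not_in_countable by fastforce
    then show "AE n in gauss \<sigma>. (mod1 (- (t + n)) + t)\<^sup>2 = (mod1 (t + n) - t)\<^sup>2"
    proof eventually_elim
      case (elim n)
      then show ?case
        using mod1_minus[OF elim] by (simp add: power2_eq_square algebra_simps)
    qed
  qed simp_all
  finally show ?thesis .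
qed

lemma delta1_abs: "delta1 \<sigma> \<bar>t\<bar> = delta1 \<sigma> t"
  by (cases "t \<ge> 0") (simp_all add: delta1_minus)

lemma mod1_error_sq_mono:
  assumes "0 \<le> u" and "u \<le> v" and "v < 1/2"
  shows "(mod1 (u + n) - u)\<^sup>2 \<le> (mod1 (v + n) - v)\<^sup>2"
proof -
  define k where "k = \<lfloor>u + n + 1/2\<rfloor>"
  define k' where "k' = \<lfloor>v + n + 1/2\<rfloor>"
  have "k \<le> k'"
    unfolding k_def k'_def using assms by (intro floor_mono) simp
  moreover have "k' < k + 2"
    unfolding k_def k'_def using assms by linarith
  ultimately consider "k' = k" | "k' = k + 1"
    by linarith
  then have "(n - k)\<^sup>2 \<le> (n - k')\<^sup>2"
  proof cases
    case 2
    have "n < k + 1/2"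
      unfolding k_def using \<open>0 \<le> u\<close> by linarith
    then show ?thesis
      using 2 by (simp add: power2_eq_square algebra_simps)
  qed simp
  then show ?thesis
    unfolding mod1_def k_def k'_def by (simp add: algebra_simps)
qed

lemma mod1_error_sq_strict_mono:
  assumes "0 \<le> u" and "u < v" and "v < 1/2" and "n \<in> {1/2 - v<..<1/2 - u}"
  shows "(mod1 (u + n) - u)\<^sup>2 < (mod1 (v + n) - v)\<^sup>2"
proof -
  have "\<lfloor>u + n + 1/2\<rfloor> = 0" and "\<lfloor>v + n + 1/2\<rfloor> = 1"
    using assms by (simp_all add: floor_eq_iff)
  moreover have "n\<^sup>2 < (n - 1)\<^sup>2"
    using assms by (simp add: power2_eq_square algebra_simps)
  ultimately show ?thesis
    unfolding mod1_def by simp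
qed

lemma delta1_strict_mono:
  assumes "\<sigma> > 0" and "0 \<le> u" and "u < v" and "v < 1/2"
  shows "delta1 \<sigma> u < delta1 \<sigma> v"
proof -
  interpret prob_space "gauss \<sigma>"
    using prob_space_gauss[OF \<open>\<sigma> > 0\<close>] .
  show ?thesis
    unfolding delta1_def
  proof (rule integral_less_AE[where A = "{1/2 - v<..<1/2 - u}"])
    show "emeasure (gauss \<sigma>) {1/2 - v<..<1/2 - u} \<noteq> 0"
      using assms by (intro emeasure_gauss_greaterThanLessThan_nonzero) auto
    show "AE n in gauss \<sigma>. n \<in> {1/2 - v<..<1/2 - u} \<longrightarrow>
        (mod1 (u + n) - u)\<^sup>2 \<noteq> (mod1 (v + n) - v)\<^sup>2"
      using mod1_error_sq_strict_mono[OF \<open>0 \<le> u\<close> \<open>u < v\<close> \<open>v < 1/2\<close>]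
      by (auto intro!: AE_I2 simp: less_le)
    show "AE n in gauss \<sigma>. (mod1 (u + n) - u)\<^sup>2 \<le> (mod1 (v + n) - v)\<^sup>2"
      using assms by (auto intro!: AE_I2 mod1_error_sq_mono)
  qed (simp_all add: integrable_mod1_error \<open>\<sigma> > 0\<close>)
qed

lemma delta1_strict_mono_abs:
  assumes "\<sigma> > 0" and "\<bar>t'\<bar> < \<bar>t\<bar>" and "\<bar>t\<bar> < 1/2"
  shows "delta1 \<sigma> t' < delta1 \<sigma> t"
  using delta1_strict_mono[OF \<open>\<sigma> > 0\<close> abs_ge_zero assms(2,3)] by (simp add: delta1_abs)

lemma delta1_mono_abs:
  assumes "\<sigma> > 0" and "\<bar>t'\<bar> \<le> \<bar>t\<bar>" and "\<bar>t\<bar> < 1/2"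
  shows "delta1 \<sigma> t' \<le> delta1 \<sigma> t"
proof (cases "\<bar>t'\<bar> = \<bar>t\<bar>")
  case True
  then show ?thesis
    by (metis delta1_abs order_refl)
next
  case False
  with \<open>\<bar>t'\<bar> \<le> \<bar>t\<bar>\<close> have "\<bar>t'\<bar> < \<bar>t\<bar>"
    by simp
  from delta1_strict_mono_abs[OF \<open>\<sigma> > 0\<close> this \<open>\<bar>t\<bar> < 1/2\<close>] show ?thesis
    by simp
qed

lemma
  fixes f :: "'b \<Rightarrow> real"
  assumes "\<And>i. i \<in> I \<Longrightarrow> prob_space (M i)" and "i \<in> I" and [measurable]: "f \<in> borel_measurable (M i)"
  shows integrable_PiM_component_iff: "integrable (PiM I M) (\<lambda>\<omega>. f (\<omega> i)) \<longleftrightarrow> integrable (M i) f"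
    and integral_PiM_component: "(\<integral>\<omega>. f (\<omega> i) \<partial>PiM I M) = integral\<^sup>L (M i) f"
proof -
  have [measurable]: "(\<lambda>\<omega>. \<omega> i) \<in> measurable (PiM I M) (M i)"
    using \<open>i \<in> I\<close> by (rule measurable_component_singleton)
  have "distr (PiM I M) (M i) (\<lambda>\<omega>. \<omega> i) = M i"
    using assms(1,2) by (rule distr_PiM_component)
  then show "integrable (PiM I M) (\<lambda>\<omega>. f (\<omega> i)) \<longleftrightarrow> integrable (M i) f"
    and "(\<integral>\<omega>. f (\<omega> i) \<partial>PiM I M) = integral\<^sup>L (M i) f"
    by (metis integrable_distr_eq integral_distr assms(3) \<open>(\<lambda>\<omega>. \<omega> i) \<in> _\<close>)+
qed

lemma deltaD_eq_sum_delta1: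
  assumes "\<sigma> > 0"
  shows "deltaD \<sigma> D s = (\<Sum>d<D. delta1 \<sigma> (s d))"
proof -
  let ?err = "\<lambda>d n. (mod1 (s d + n) - s d)\<^sup>2"
  have gauss: "prob_space (gauss \<sigma>)"
    using prob_space_gauss[OF assms] .
  have "integrable (PiM {..<D} (\<lambda>_. gauss \<sigma>)) (\<lambda>\<omega>. ?err d (\<omega> d))" if "d < D" for d
    using that by (subst integrable_PiM_component_iff) (simp_all add: gauss integrable_mod1_error assms)
  then have "deltaD \<sigma> D s = (\<Sum>d<D. \<integral>\<omega>. ?err d (\<omega> d) \<partial>PiM {..<D} (\<lambda>_. gauss \<sigma>))"
    unfolding deltaD_def by (subst Bochner_Integration.integral_sum) auto
  also have "\<dots> = (\<Sum>d<D. delta1 \<sigma> (s d))"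
    unfolding delta1_def by (intro sum.cong refl integral_PiM_component) (simp_all add: gauss)
  finally show ?thesis .
qed

theorem theorem3:
  fixes D :: nat and a N\<^sub>0 P :: real
  assumes "D \<ge> 1" and "0 < a" and "a < 1/2" and "N\<^sub>0 > 0" and "P > 0"
  shows "(\<forall>s :: nat \<Rightarrow> real. (\<forall>d<D. s d \<in> {-a..a}) \<longrightarrow>
            real D * delta1 (sqrt (N\<^sub>0 / P)) 0 \<le> deltaD (sqrt (N\<^sub>0 / P)) D s \<and>
            deltaD (sqrt (N\<^sub>0 / P)) D s \<le> real D * delta1 (sqrt (N\<^sub>0 / P)) a)
       \<and> (\<forall>t t' :: real. t \<in> {-a..a} \<longrightarrow> t' \<in> {-a..a} \<longrightarrow> \<bar>t'\<bar> < \<bar>t\<bar> \<longrightarrow>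
            delta1 (sqrt (N\<^sub>0 / P)) t' < delta1 (sqrt (N\<^sub>0 / P)) t)"
proof -
  define \<sigma> where "\<sigma> = sqrt (N\<^sub>0 / P)"
  have "\<sigma> > 0"
    using assms by (simp add: \<sigma>_def)
  have coordinate_bounds: "delta1 \<sigma> 0 \<le> delta1 \<sigma> t \<and> delta1 \<sigma> t \<le> delta1 \<sigma> a"
    if "t \<in> {-a..a}" for t
    using delta1_mono_abs[OF \<open>\<sigma> > 0\<close>, of 0 t] delta1_mono_abs[OF \<open>\<sigma> > 0\<close>, of t a] that assms
    by auto
  have "real D * delta1 \<sigma> 0 \<le> deltaD \<sigma> D s \<and> deltaD \<sigma> D s \<le> real D * delta1 \<sigma> a"
    if "\<forall>d<D. s d \<in> {-a..a}" for s
    unfolding deltaD_eq_sum_delta1[OF \<open>\<sigma> > 0\<close>]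
    using sum_mono[of "{..<D}" "\<lambda>_. delta1 \<sigma> 0" "\<lambda>d. delta1 \<sigma> (s d)"]
      sum_mono[of "{..<D}" "\<lambda>d. delta1 \<sigma> (s d)" "\<lambda>_. delta1 \<sigma> a"] coordinate_bounds that
    by auto
  moreover have "delta1 \<sigma> t' < delta1 \<sigma> t" if "t \<in> {-a..a}" and "\<bar>t'\<bar> < \<bar>t\<bar>" for t t'
    using delta1_strict_mono_abs[OF \<open>\<sigma> > 0\<close> that(2)] that(1) assms by auto
  ultimately show ?thesis
    unfolding \<sigma>_def by blast
qed

end
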